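(* Let $r=[r_0,\ldots,r_m]$ and $c=[c_0,\ldots,c_n]$ be selections of rows and columns of the Pascal upper triangular matrix $T$, and let $\{\hat r,\hat c\}$ be an ordered sub-pair of $\{r,c\}$ of length $p+1\ge 1$, with $\hat r=[\hat r_0,\ldots,\hat r_p]$ and $\hat c=[\hat c_0,\ldots,\hat c_p]$. Then: (i) $T_{\hat r,\hat c}$ is a $(p+1)\times(p+1)$ invertible submatrix of $T_{r,c}$; (ii) $T_{\hat r,c}$ is a $(p+1)\times(n+1)$ matrix of full row rank $p+1$; (iii) $T_{r,\hat c}$ is an $(m+1)\times(p+1)$ matrix of full column rank $p+1$. If moreover $\{\hat r,\hat c\}$ is maximal, then: (iv) $\operatorname{rank}(T_{r,c})=p+1$; (v) the columns of $T_{r,\hat c}$ span the column space of $T_{r,c}$; (vi) the rows of $T_{\hat r,c}$ span the row space of $T_{r,c}$.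
   Context: The Pascal upper triangular matrix is the infinite matrix $T=(T_{i,j})_{i,j\ge 0}$ with $T_{i,j}=\binom{j}{i}$, where $\binom{j}{i}:=0$ if $i>j$ (rows and columns indexed from $0$). A selection of rows (resp. columns) is a strictly increasing finite sequence of nonnegative integers. For selections $r=[r_0,\ldots,r_m]$ and $c=[c_0,\ldots,c_n]$, $T_{r,c}$ denotes the $(m+1)\times(n+1)$ matrix whose $(i,j)$ entry is $\binom{c_j}{r_i}$. A pair $\{\hat r,\hat c\}$ is an ordered sub-pair of $\{r,c\}$ of length $p+1$ if $\hat r=[\hat r_0,\ldots,\hat r_p]$ is a subsequence of $r$, $\hat c=[\hat c_0,\ldots,\hat c_p]$ is a subsequence of $c$, and $\hat r_i\le \hat c_i$ for all $i=0,\ldots,p$ (the empty pair has length $0$). It is maximal if no ordered sub-pair of $\{r,c\}$ has length greater than $p+1$. *)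

theory Defs
  imports "Jordan_Normal_Form.DL_Rank" "Jordan_Normal_Form.DL_Submatrix" "HOL-Library.Sublist"
begin

definition selection :: "nat list \<Rightarrow> bool" where
  "selection s \<longleftrightarrow> s \<noteq> [] \<and> sorted_wrt (<) s"

definition pascal_sub :: "nat list \<Rightarrow> nat list \<Rightarrow> real mat" where
  "pascal_sub r c = mat (length r) (length c) (\<lambda>(i,j). real ((c ! j) choose (r ! i)))"

definition ordered_subpair :: "nat list \<Rightarrow> nat list \<Rightarrow> nat list \<Rightarrow> nat list \<Rightarrow> bool" where
  "ordered_subpair r c rh ch \<longleftrightarrow> subseq rh r \<and> subseq ch c \<and> length rh = length ch
     \<and> (\<forall>i < length rh. rh ! i \<le> ch ! i)"

definition maximal_subpair :: "nat list \<Rightarrow> nat list \<Rightarrow> nat list \<Rightarrow> nat list \<Rightarrow> bool" where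
  "maximal_subpair r c rh ch \<longleftrightarrow> ordered_subpair r c rh ch
     \<and> (\<forall>rh' ch'. ordered_subpair r c rh' ch' \<longrightarrow> length rh' \<le> length rh)"

end

theory Submission
  imports Defs "Jordan_Normal_Form.DL_Rank_Submatrix"
begin

text \<open>
  A square minor of T with strictly increasing row indices s and column indices d is nonnegative,
  and positive exactly when s_i \<le> d_i for all i. If all d_j are positive, Pascal's rule
  binom(d, s) = binom(d-1, s) + binom(d-1, s-1) applied to every row, together with multilinearity
  of the determinant, writes the minor as a sum of minors with columns d-1, each of which is zero
  (a repeated row) or again such a minor; a leading column index 0 is removed by expansion along
  the first column. Hence an ordered sub-pair gives an invertible block T_{rh,ch}, which yields
  the rank statements. If the sub-pair is maximal, every bordered minor obtained by adding one
  more row r_i and column c_j vanishes (a repeated row or column, or else sorting it produces a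
  longer ordered sub-pair), so the Schur complement of T_{rh,ch} in it is zero; entrywise this is
  the factorisation T_{r,c} = T_{r,ch} T_{rh,ch}^{-1} T_{rh,c}, from which the column and row
  spaces and the rank follow.
\<close>

lemma det_nonzero_obtain_inverse:
  fixes A :: "'a::field mat"
  assumes "A \<in> carrier_mat n n" and "det A \<noteq> 0"
  obtains B where "B \<in> carrier_mat n n" "A * B = 1\<^sub>m n" "B * A = 1\<^sub>m n"
  using det_non_zero_imp_unit[OF assms, of "()"] that
  unfolding Units_def ring_mat_def by auto

lemma invertible_mat_if_det_nonzero:
  fixes A :: "'a::field mat"
  assumes A: "A \<in> carrier_mat n n" and "det A \<noteq> 0"
  shows "invertible_mat A"
proof -
  obtain B where "B \<in> carrier_mat n n" "A * B = 1\<^sub>m n" "B * A = 1\<^sub>m n"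
    using det_nonzero_obtain_inverse[OF assms] .
  then show ?thesis
    using A unfolding invertible_mat_def inverts_mat_def by auto
qed

lemma det_four_block_mat_schur_complement:
  fixes A :: "'a::idom mat"
  assumes A: "A \<in> carrier_mat n n" and B: "B \<in> carrier_mat n m"
    and C: "C \<in> carrier_mat m n" and D: "D \<in> carrier_mat m m"
    and A': "A' \<in> carrier_mat n n" and inv: "A * A' = 1\<^sub>m n"
  shows "det (four_block_mat A B C D) = det A * det (D - C * (A' * B))"
proof -
  let ?X = "A' * B"
  have X: "?X \<in> carrier_mat n m" using A' B by auto
  define E where "E = four_block_mat (1\<^sub>m n) (- ?X) (0\<^sub>m m n) (1\<^sub>m m)"
  have E: "E \<in> carrier_mat (n + m) (n + m)" unfolding E_def by auto
  have "A * - ?X = - (A * ?X)"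
    by (rule uminus_mult_right_mat) (use A X in auto)
  also have "\<dots> = - B"
    using assoc_mult_mat[OF A A' B, symmetric] inv B by simp
  finally have "A * - ?X = - B" .
  then have upper_right: "A * - ?X + B * 1\<^sub>m m = 0\<^sub>m n m"
    using B by simp
  have "C * - ?X = - (C * ?X)"
    by (rule uminus_mult_right_mat) (use C X in auto)
  then have lower_right: "C * - ?X + D * 1\<^sub>m m = D - C * ?X"
    using C D X by (simp add: comm_add_mat[of _ m m] minus_add_uminus_mat[of _ m m])
  have "det E = 1"
    unfolding E_def by (subst det_four_block_mat_lower_left_zero[of _ n _ m]) (use X in auto)
  then have "det (four_block_mat A B C D) = det (four_block_mat A B C D * E)"
    using det_mult[OF four_block_carrier_mat[OF A D] E] by simp
  also have "four_block_mat A B C D * E = four_block_mat A (0\<^sub>m n m) C (D - C * ?X)"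
    unfolding E_def
    by (subst mult_four_block_mat[OF A B C D _ uminus_carrier_mat[OF X]])
      (use A B C D upper_right lower_right in \<open>auto simp: right_mult_zero_mat[of _ m m n]\<close>)
  also have "det \<dots> = det A * det (D - C * ?X)"
    by (rule det_four_block_mat_upper_right_zero[OF A refl C]) (use C X in \<open>simp add: minus_carrier_mat\<close>)
  finally show ?thesis .
qed

lemma subseq_sorted_wrt: "subseq xs ys \<Longrightarrow> sorted_wrt P ys \<Longrightarrow> sorted_wrt P xs"
proof (induction rule: list_emb.induct)
  case (list_emb_Cons2 x y xs ys)
  then show ?case using list_emb_set[OF list_emb_Cons2(2)] by auto
qed auto

lemma set_mono_subseq: "subseq xs ys \<Longrightarrow> set xs \<subseteq> set ys"
  by (metis subseq_conv_nths set_nths_subset)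

lemma subseq_obtain_nths:
  assumes "subseq xs ys"
  obtains I where "I \<subseteq> {..<length ys}" "xs = nths ys I"
proof -
  obtain N where N: "xs = nths ys N" using assms subseq_conv_nths by blast
  have "nths ys N = nths ys {i \<in> N. i < length ys}"
    unfolding nths_def by (auto intro!: arg_cong[where f = "map fst"] filter_cong simp: set_zip)
  then show ?thesis using that[of "{i \<in> N. i < length ys}"] N by auto
qed

context vec_space
begin

lemma rank_le_nr:
  assumes A: "A \<in> carrier_mat n nc"
  shows "rank A \<le> n"
proof -
  obtain S where S: "maximal S (\<lambda>T. T \<subseteq> set (cols A) \<and> lin_indpt T)"
    using maximal_exists[of "(\<lambda>T. T \<subseteq> set (cols A) \<and> lin_indpt T)" "card (set (cols A))" "{}"]
    by (meson List.finite_set card_mono empty_iff empty_subsetI finite_lin_indpt2 rev_finite_subset)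
  have "S \<subseteq> set (cols A)" "lin_indpt S" using S unfolding maximal_def by auto
  moreover have "set (cols A) \<subseteq> carrier_vec n" using A cols_dim by blast
  ultimately have "card S \<le> dim" using li_le_dim(2)[OF fin_dim] by blast
  then show ?thesis using rank_card_indpt[OF A S] dim_is_n by simp
qed

lemma col_space_mono: "set (cols A) \<subseteq> set (cols B) \<Longrightarrow> col_space A \<subseteq> col_space B"
  unfolding col_space_def by (rule span_is_monotone)

lemma row_space_mono: "set (rows A) \<subseteq> set (rows B) \<Longrightarrow> row_space A \<subseteq> row_space B"
  unfolding row_space_def by (rule span_is_monotone)

lemma col_space_mult_subset:
  assumes A: "A \<in> carrier_mat n k" and X: "X \<in> carrier_mat k nc"
  shows "col_space (A * X) \<subseteq> col_space A"
proof
  fix y assume "y \<in> col_space (A * X)"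
  then obtain x where y: "y \<in> carrier_vec n" and x: "x \<in> carrier_vec nc" and yx: "(A * X) *\<^sub>v x = y"
    unfolding col_space_eq[OF mult_carrier_mat[OF A X]] using A X by auto
  have "A *\<^sub>v (X *\<^sub>v x) = y" using yx assoc_mult_mat_vec[OF A X x] by simp
  moreover have "X *\<^sub>v x \<in> carrier_vec k" using X x by auto
  ultimately show "y \<in> col_space A" unfolding col_space_eq[OF A] using y A by auto
qed

lemma row_space_mult_subset:
  assumes Y: "Y \<in> carrier_mat nr k" and B: "B \<in> carrier_mat k n"
  shows "row_space (Y * B) \<subseteq> row_space B"
  using col_space_mult_subset[of "B\<^sup>T" k "Y\<^sup>T" nr] Y B
  by (simp add: row_space_eq_col_space_transpose transpose_mult[OF Y B])

lemma rank_eq_if_col_space_eq: "col_space A = col_space B \<Longrightarrow> rank A = rank B"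
  unfolding rank_def col_space_def by simp

end

lemma pascal_sub_carrier: "pascal_sub s d \<in> carrier_mat (length s) (length d)"
  unfolding pascal_sub_def by auto

lemma pascal_sub_dims [simp]:
  "dim_row (pascal_sub s d) = length s" "dim_col (pascal_sub s d) = length d"
  unfolding pascal_sub_def by auto

lemma pascal_sub_index [simp]:
  "i < length s \<Longrightarrow> j < length d \<Longrightarrow> pascal_sub s d $$ (i, j) = real (d ! j choose s ! i)"
  unfolding pascal_sub_def by auto

lemma row_pascal_sub [simp]:
  "i < length s \<Longrightarrow> row (pascal_sub s d) i = vec (length d) (\<lambda>j. real (d ! j choose s ! i))"
  by (rule eq_vecI) auto

lemma col_pascal_sub [simp]:
  "j < length d \<Longrightarrow> col (pascal_sub s d) j = vec (length s) (\<lambda>i. real (d ! j choose s ! i))"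
  by (rule eq_vecI) auto

lemma submatrix_pascal_sub: "submatrix (pascal_sub r c) I J = pascal_sub (nths r I) (nths c J)"
  by (rule eq_matI) (auto simp: dim_submatrix submatrix_index nth_nths length_nths pick_le)

lemma pascal_sub_append:
  "pascal_sub (s @ s') (d @ d') =
    four_block_mat (pascal_sub s d) (pascal_sub s d') (pascal_sub s' d) (pascal_sub s' d')"
  by (rule eq_matI) (auto simp: nth_append)

lemma set_cols_pascal_sub_mono:
  "set d \<subseteq> set d' \<Longrightarrow> set (cols (pascal_sub s d)) \<subseteq> set (cols (pascal_sub s d'))"
proof
  fix v assume "v \<in> set (cols (pascal_sub s d))"
  then obtain l where l: "l < length d" "v = col (pascal_sub s d) l" by (auto simp: cols_def)
  moreover assume "set d \<subseteq> set d'"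
  ultimately obtain j where "j < length d'" "d' ! j = d ! l" by (metis in_set_conv_nth nth_mem subsetD)
  then show "v \<in> set (cols (pascal_sub s d'))"
    using l by (auto simp: cols_def intro!: image_eqI[where x = j])
qed

lemma set_rows_pascal_sub_mono:
  "set s \<subseteq> set s' \<Longrightarrow> set (rows (pascal_sub s d)) \<subseteq> set (rows (pascal_sub s' d))"
proof
  fix v assume "v \<in> set (rows (pascal_sub s d))"
  then obtain l where l: "l < length s" "v = row (pascal_sub s d) l" by (auto simp: rows_def)
  moreover assume "set s \<subseteq> set s'"
  ultimately obtain i where "i < length s'" "s' ! i = s ! l" by (metis in_set_conv_nth nth_mem subsetD)
  then show "v \<in> set (rows (pascal_sub s' d))"
    using l by (auto simp: rows_def intro!: image_eqI[where x = i])
qed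

lemma det_pascal_sub_not_distinct_rows:
  assumes "\<not> distinct s" and "length s = length d"
  shows "det (pascal_sub s d) = 0"
proof -
  obtain i j where "i < length s" "j < length s" "i \<noteq> j" "s ! i = s ! j"
    using assms(1) by (auto simp: distinct_conv_nth)
  then show ?thesis
    using det_identical_rows[OF pascal_sub_carrier[of s d, unfolded assms(2)]] assms(2) by auto
qed

lemma det_pascal_sub_not_distinct_cols:
  assumes "\<not> distinct d" and "length s = length d"
  shows "det (pascal_sub s d) = 0"
proof -
  obtain i j where "i < length d" "j < length d" "i \<noteq> j" "d ! i = d ! j"
    using assms(1) by (auto simp: distinct_conv_nth)
  then show ?thesis
    using det_identical_cols[OF pascal_sub_carrier[of s d, folded assms(2)]] assms(2) by auto
qed

lemma det_pascal_sub_Cons_zero: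
  assumes s: "sorted_wrt (<) (s0 # s)" and len: "length s = length d"
  shows "det (pascal_sub (s0 # s) (0 # d)) = (if s0 = 0 then det (pascal_sub s d) else 0)"
proof -
  let ?A = "pascal_sub (s0 # s) (0 # d)"
  have A: "?A \<in> carrier_mat (Suc (length s)) (Suc (length s))"
    using pascal_sub_carrier[of "s0 # s" "0 # d"] len by simp
  have below: "?A $$ (Suc i, 0) = 0" if i: "i < length s" for i
  proof -
    have "0 < s ! i" using s nth_mem[OF i] by auto
    then show ?thesis using i by simp
  qed
  have "mat_delete ?A 0 0 = pascal_sub s d"
    by (rule eq_matI) (auto simp: mat_delete_def len)
  then have cof: "cofactor ?A 0 0 = det (pascal_sub s d)"
    by (simp add: cofactor_def)
  have "det ?A = (\<Sum>i<Suc (length s). ?A $$ (i, 0) * cofactor ?A i 0)"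
    by (rule laplace_expansion_column[OF A]) simp
  also have "\<dots> = ?A $$ (0, 0) * cofactor ?A 0 0
      + (\<Sum>i<length s. ?A $$ (Suc i, 0) * cofactor ?A (Suc i) 0)"
    by (rule sum.lessThan_Suc_shift)
  also have "(\<Sum>i<length s. ?A $$ (Suc i, 0) * cofactor ?A (Suc i) 0) = 0"
    by (rule sum.neutral) (use below in auto)
  finally show ?thesis
    using cof by simp
qed

\<comment> \<open>The guard \<open>s ! i < f i\<close> stands for the vanishing term binom(d-1, s-1) with s = 0,
  which truncated subtraction would turn into binom(d-1, 0).\<close>
lemma det_pascal_sub_split_rows:
  assumes d_pos: "\<forall>x\<in>set d. 0 < x" and len: "length s = length d"
  defines "F \<equiv> {f. (\<forall>i\<in>{0..<length s}. f i \<in> {0,1}) \<and> (\<forall>i. i \<notin> {0..<length s} \<longrightarrow> f i = i)}"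
  shows "det (pascal_sub s d) = (\<Sum>f\<in>F. if \<exists>i<length s. s ! i < f i then 0
           else det (pascal_sub (map (\<lambda>i. s ! i - f i) [0..<length s]) (map (\<lambda>x. x - 1) d)))"
proof -
  define n where "n = length s"
  define e where "e = map (\<lambda>x. x - 1) d"
  define a where "a i f = vec n (\<lambda>j. if s ! i < f then 0 else real (e ! j choose (s ! i - f)))"
    for i f :: nat
  have a: "a \<in> {0..<n} \<rightarrow> {0,1} \<rightarrow> carrier_vec n" unfolding a_def by auto
  have "pascal_sub s d = mat\<^sub>r n n (\<lambda>i. finsum_vec TYPE(real) n (a i) {0,1})"
  proof (rule eq_matI)
    fix i j assume "i < dim_row (mat\<^sub>r n n (\<lambda>i. finsum_vec TYPE(real) n (a i) {0,1}))"
      and "j < dim_col (mat\<^sub>r n n (\<lambda>i. finsum_vec TYPE(real) n (a i) {0,1}))"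
    then have i: "i < n" and j: "j < n" by auto
    have sum: "finsum_vec TYPE(real) n (a i) {0,1} $ j = (\<Sum>f\<in>{0,1}. a i f $ j)"
      by (rule index_finsum_vec) (auto simp: a_def j)
    have "d ! j = Suc (e ! j)"
      using j d_pos len unfolding e_def n_def by auto
    then show "pascal_sub s d $$ (i, j) = mat\<^sub>r n n (\<lambda>i. finsum_vec TYPE(real) n (a i) {0,1}) $$ (i, j)"
      using i j len sum by (cases "s ! i") (simp_all add: a_def n_def)
  qed (auto simp: n_def len)
  also have "det \<dots> = (\<Sum>f\<in>F. det (mat\<^sub>r n n (\<lambda>i. a i (f i))))"
    unfolding F_def n_def[symmetric] by (rule det_linear_rows_sum[OF _ a]) simp
  also have "\<dots> = (\<Sum>f\<in>F. if \<exists>i<n. s ! i < f i then 0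
           else det (pascal_sub (map (\<lambda>i. s ! i - f i) [0..<n]) e))"
  proof (rule sum.cong[OF refl])
    fix f
    show "det (mat\<^sub>r n n (\<lambda>i. a i (f i))) = (if \<exists>i<n. s ! i < f i then 0
           else det (pascal_sub (map (\<lambda>i. s ! i - f i) [0..<n]) e))"
    proof (cases "\<exists>i<n. s ! i < f i")
      case True
      then obtain k where k: "k < n" "s ! k < f k" by auto
      have "mat\<^sub>r n n (\<lambda>i. a i (f i)) = mat\<^sub>r n n (\<lambda>i. if i = k then 0\<^sub>v n else a i (f i))"
        using k by (intro eq_rowI) (auto simp: a_def)
      then have "det (mat\<^sub>r n n (\<lambda>i. a i (f i))) = 0"
        using det_row_0[OF k(1), of "\<lambda>i. a i (f i)"] by (simp add: a_def)
      then show ?thesis using True by simp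
    next
      case False
      have "mat\<^sub>r n n (\<lambda>i. a i (f i)) = pascal_sub (map (\<lambda>i. s ! i - f i) [0..<n]) e"
        using False by (intro eq_matI) (auto simp: a_def e_def n_def len)
      then show ?thesis using False by auto
    qed
  qed
  finally show ?thesis unfolding e_def n_def .
qed

lemma sorted_map_minus_le_one:
  fixes s :: "nat list" and f :: "nat \<Rightarrow> nat"
  assumes s: "sorted_wrt (<) s" and f: "\<forall>i<length s. f i \<le> 1"
  shows "sorted (map (\<lambda>i. s ! i - f i) [0..<length s])"
  unfolding sorted_iff_nth_mono_less
proof (intro allI impI)
  fix i j assume ij: "i < j" "j < length (map (\<lambda>i. s ! i - f i) [0..<length s])"
  have "s ! i < s ! j" using s ij by (simp add: sorted_wrt_iff_nth_less)
  moreover have "f j \<le> 1" using f ij by simp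
  ultimately have "s ! i - f i \<le> s ! j - f j" by arith
  then show "map (\<lambda>i. s ! i - f i) [0..<length s] ! i \<le> map (\<lambda>i. s ! i - f i) [0..<length s] ! j"
    using ij by simp
qed

lemma sorted_wrt_lower_diagonal:
  fixes s d :: "nat list"
  assumes s: "sorted_wrt (<) s" and d: "sorted_wrt (<) d" and len: "length s = length d"
    and d_pos: "\<forall>x\<in>set d. 0 < x" and le: "\<forall>i<length s. s ! i \<le> d ! i"
  shows "sorted_wrt (<) (map (\<lambda>i. s ! i - (if s ! i = d ! i then 1 else 0)) [0..<length s])"
  unfolding sorted_wrt_iff_nth_less
proof (intro allI impI)
  fix i j assume ij: "i < j" "j < length (map (\<lambda>i. s ! i - (if s ! i = d ! i then 1 else 0)) [0..<length s])"
  then have j: "j < length s" by simp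
  have "s ! i < s ! j" using s ij j by (simp add: sorted_wrt_iff_nth_less)
  moreover have "d ! i < d ! j" using d ij j len by (simp add: sorted_wrt_iff_nth_less)
  moreover have "s ! i \<le> d ! i" "0 < d ! i" using le d_pos ij j len by auto
  ultimately show "map (\<lambda>i. s ! i - (if s ! i = d ! i then 1 else 0)) [0..<length s] ! i
      < map (\<lambda>i. s ! i - (if s ! i = d ! i then 1 else 0)) [0..<length s] ! j"
    using ij j by (auto; arith)
qed

lemma det_pascal_sub_sign_step:
  fixes s d :: "nat list"
  defines "e \<equiv> map (\<lambda>x. x - 1) d"
  assumes s: "sorted_wrt (<) s" and d: "sorted_wrt (<) d" and len: "length s = length d"
    and d_pos: "\<forall>x\<in>set d. 0 < x"
    and IH: "\<And>t. sorted_wrt (<) t \<Longrightarrow> length t = length d \<Longrightarrow>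
      0 \<le> det (pascal_sub t e) \<and> (0 < det (pascal_sub t e) \<longleftrightarrow> (\<forall>i<length t. t ! i \<le> e ! i))"
  shows "0 \<le> det (pascal_sub s d) \<and> (0 < det (pascal_sub s d) \<longleftrightarrow> (\<forall>i<length s. s ! i \<le> d ! i))"
proof -
  define n where "n = length s"
  define F where "F = {f. (\<forall>i\<in>{0..<n}. f i \<in> {0,1::nat}) \<and> (\<forall>i. i \<notin> {0..<n} \<longrightarrow> f i = i)}"
  define t where "t f = map (\<lambda>i. s ! i - f i) [0..<n]" for f :: "nat \<Rightarrow> nat"
  define summand where "summand f = (if \<exists>i<n. s ! i < f i then 0 else det (pascal_sub (t f) e))" for f
  have det_sum: "det (pascal_sub s d) = (\<Sum>f\<in>F. summand f)"
    using det_pascal_sub_split_rows[OF d_pos len] unfolding summand_def t_def F_def n_def e_def .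
  have fin: "finite F" unfolding F_def by (rule finite_bounded_functions) auto
  have len_t: "length (t f) = length d" for f unfolding t_def n_def len by simp
  have t_nth: "i < n \<Longrightarrow> t f ! i = s ! i - f i" for f i unfolding t_def by simp
  have e_nth: "i < n \<Longrightarrow> e ! i = d ! i - 1" for i unfolding e_def n_def len by simp
  have F_le: "f \<in> F \<Longrightarrow> i < n \<Longrightarrow> f i \<le> 1" for f i
    unfolding F_def by (auto dest!: bspec[of _ _ i])
  have d_nth_pos: "i < n \<Longrightarrow> 0 < d ! i" for i
    using d_pos unfolding n_def len by simp
  have IH_summand: "0 \<le> summand f \<and> (0 < summand f \<longrightarrow> (\<forall>i<n. t f ! i \<le> e ! i))" if f: "f \<in> F" for f
  proof (cases "(\<exists>i<n. s ! i < f i) \<or> \<not> distinct (t f)")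
    case True
    then have "summand f = 0"
      using det_pascal_sub_not_distinct_rows[of "t f" e] len_t unfolding summand_def e_def by auto
    then show ?thesis by simp
  next
    case False
    have "sorted (t f)"
      using sorted_map_minus_le_one[OF s] F_le[OF f] unfolding t_def n_def by simp
    then have "sorted_wrt (<) (t f)" using False by (simp add: strict_sorted_iff)
    then show ?thesis using IH[OF _ len_t] False unfolding summand_def by (auto simp: len_t n_def len)
  qed
  have pos_imp: "\<forall>i<n. s ! i \<le> d ! i" if f: "f \<in> F" and pos: "0 < summand f" for f
  proof (intro allI impI)
    fix i assume i: "i < n"
    have "f i \<le> 1" "\<not> s ! i < f i"
      using F_le[OF f i] i pos unfolding summand_def by (auto split: if_splits)
    moreover have "t f ! i \<le> e ! i" using IH_summand[OF f] pos i by auto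
    ultimately show "s ! i \<le> d ! i" using t_nth[OF i, of f] e_nth[OF i] d_nth_pos[OF i] by arith
  qed
  have pos_if: "\<exists>f\<in>F. 0 < summand f" if le: "\<forall>i<n. s ! i \<le> d ! i"
  proof
    \<comment> \<open>lower exactly the rows that touch the diagonal\<close>
    define g where "g i = (if i < n then if s ! i = d ! i then 1 else 0 else i)" for i
    show g: "g \<in> F" unfolding F_def g_def by auto
    have g_nth: "i < n \<Longrightarrow> t g ! i \<le> e ! i" for i
      using le d_nth_pos t_nth e_nth unfolding g_def by fastforce
    have "t g = map (\<lambda>i. s ! i - (if s ! i = d ! i then 1 else 0)) [0..<length s]"
      unfolding t_def g_def n_def by simp
    then have "sorted_wrt (<) (t g)"
      using sorted_wrt_lower_diagonal[OF s d len d_pos] le unfolding n_def by simp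
    moreover have "\<not> s ! i < g i" if i: "i < n" for i
      using le i d_nth_pos[OF i] unfolding g_def by auto
    then have "\<not> (\<exists>i<n. s ! i < g i)" by blast
    ultimately show "0 < summand g"
      using IH[OF _ len_t] g_nth len_t unfolding summand_def by (auto simp: n_def len)
  qed
  have nonneg: "0 \<le> det (pascal_sub s d)"
    unfolding det_sum by (rule sum_nonneg) (use IH_summand in blast)
  moreover have "0 < det (pascal_sub s d) \<longleftrightarrow> (\<forall>i<n. s ! i \<le> d ! i)"
  proof
    assume "0 < det (pascal_sub s d)"
    moreover have "(\<Sum>f\<in>F. summand f) \<le> 0" if "\<forall>f\<in>F. summand f \<le> 0"
      using that by (auto intro: sum_nonpos)
    ultimately obtain f where "f \<in> F" "0 < summand f"
      unfolding det_sum by force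
    then show "\<forall>i<n. s ! i \<le> d ! i" by (rule pos_imp)
  next
    assume "\<forall>i<n. s ! i \<le> d ! i"
    then obtain g where "g \<in> F" "0 < summand g" using pos_if by blast
    then show "0 < det (pascal_sub s d)"
      unfolding det_sum by (rule sum_pos2[OF fin]) (use IH_summand in blast)
  qed
  ultimately show ?thesis unfolding n_def by blast
qed

lemma sum_list_map_pred: "\<forall>x\<in>set d. 0 < x \<Longrightarrow> sum_list (map (\<lambda>x. x - 1) d) + length d = sum_list d"
  by (induction d) auto

lemma det_pascal_sub_sign:
  assumes "sorted_wrt (<) s" and "sorted_wrt (<) d" and "length s = length d"
  shows "0 \<le> det (pascal_sub s d) \<and> (0 < det (pascal_sub s d) \<longleftrightarrow> (\<forall>i<length s. s ! i \<le> d ! i))"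
  using assms
proof (induction "length d + sum_list d" arbitrary: s d rule: less_induct)
  case less
  show ?case
  proof (cases d)
    case Nil
    then show ?thesis using less.prems pascal_sub_carrier[of "[]" "[]"] by simp
  next
    case (Cons d0 d')
    then obtain s0 s' where s: "s = s0 # s'" using less.prems by (cases s) auto
    show ?thesis
    proof (cases "d0 = 0")
      case True
      have IH: "0 \<le> det (pascal_sub s' d') \<and>
          (0 < det (pascal_sub s' d') \<longleftrightarrow> (\<forall>i<length s'. s' ! i \<le> d' ! i))"
        using less.hyps[of d' s'] less.prems s Cons by simp
      show ?thesis
        using det_pascal_sub_Cons_zero[of s0 s' d'] IH less.prems s Cons True
        by (auto simp: All_less_Suc2)
    next
      case False
      then have d_pos: "\<forall>x\<in>set d. 0 < x" using less.prems(2) Cons by auto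
      have "sorted_wrt (<) (map (\<lambda>x. x - 1) d)"
        unfolding sorted_wrt_iff_nth_less
      proof (intro allI impI)
        fix i j assume ij: "i < j" "j < length (map (\<lambda>x. x - 1) d)"
        have "0 < d ! i" using d_pos nth_mem[of i d] ij by simp
        moreover have "d ! i < d ! j" using less.prems(2) ij by (simp add: sorted_wrt_iff_nth_less)
        ultimately show "map (\<lambda>x. x - 1) d ! i < map (\<lambda>x. x - 1) d ! j" using ij by simp
      qed
      moreover have "length (map (\<lambda>x. x - 1) d) + sum_list (map (\<lambda>x. x - 1) d) < length d + sum_list d"
        using sum_list_map_pred[OF d_pos] Cons by simp
      ultimately show ?thesis
        using det_pascal_sub_sign_step[OF less.prems(1,2,3) d_pos] less.hyps by simp
    qed
  qed
qed

corollary det_pascal_sub_nonzero_iff: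
  assumes "sorted_wrt (<) s" and "sorted_wrt (<) d" and "length s = length d"
  shows "det (pascal_sub s d) \<noteq> 0 \<longleftrightarrow> (\<forall>i<length s. s ! i \<le> d ! i)"
  using det_pascal_sub_sign[OF assms] by auto

lemma det_pascal_sub_permute_rows:
  assumes p: "p permutes {..<length s}" and len: "length s = length d"
  shows "det (pascal_sub (permute_list p s) d) = signof p * det (pascal_sub s d)"
proof -
  have p': "p permutes {0..<length s}" using p by (simp add: atLeast0LessThan)
  have "pascal_sub (permute_list p s) d = mat (length s) (length s) (\<lambda>(i, j). pascal_sub s d $$ (p i, j))"
    by (rule eq_matI) (use len permutes_in_image[OF p] in \<open>auto simp: permute_list_nth[OF p]\<close>)
  then show ?thesis
    using det_permute_rows[OF _ p', of "pascal_sub s d"] pascal_sub_carrier[of s d] len by simp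
qed

lemma det_pascal_sub_permute_cols:
  assumes p: "p permutes {..<length d}" and len: "length s = length d"
  shows "det (pascal_sub s (permute_list p d)) = signof p * det (pascal_sub s d)"
proof -
  let ?T = "(pascal_sub s d)\<^sup>T"
  have p': "p permutes {0..<length d}" using p by (simp add: atLeast0LessThan)
  have T: "?T \<in> carrier_mat (length d) (length d)" using len pascal_sub_carrier[of s d] by auto
  have "(pascal_sub s (permute_list p d))\<^sup>T = mat (length d) (length d) (\<lambda>(i, j). ?T $$ (p i, j))"
    by (rule eq_matI) (use len permutes_in_image[OF p] in \<open>auto simp: permute_list_nth[OF p]\<close>)
  then show ?thesis
    using det_permute_rows[OF T p'] len
      det_transpose[OF pascal_sub_carrier[of s "permute_list p d", unfolded length_permute_list len[symmetric]]]
      det_transpose[OF pascal_sub_carrier[of s d, unfolded len]]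
    by simp
qed

lemma det_pascal_sub_sort_nonzero:
  assumes len: "length s = length d" and nz: "det (pascal_sub s d) \<noteq> 0"
  shows "det (pascal_sub (sort s) (sort d)) \<noteq> 0"
proof -
  obtain p where p: "p permutes {..<length s}" "permute_list p s = sort s"
    using mset_eq_permutation[of "sort s" s] by auto
  obtain q where q: "q permutes {..<length d}" "permute_list q d = sort d"
    using mset_eq_permutation[of "sort d" d] by auto
  have "det (pascal_sub (sort s) (sort d)) = signof q * (signof p * det (pascal_sub s d))"
    using det_pascal_sub_permute_cols[OF q(1), of "sort s"] det_pascal_sub_permute_rows[OF p(1) len]
      p(2) q(2) len by simp
  then show ?thesis using nz by (simp add: sign_def)
qed

lemma det_pascal_sub_beyond_maximal:
  assumes mx: "maximal_subpair r c rh ch"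
    and r: "sorted_wrt (<) r" and c: "sorted_wrt (<) c"
    and xs: "set xs \<subseteq> set r" and ys: "set ys \<subseteq> set c"
    and len: "length xs = length ys" and longer: "length rh < length xs"
  shows "det (pascal_sub xs ys) = 0"
proof (rule ccontr)
  assume nz: "det (pascal_sub xs ys) \<noteq> 0"
  then have "distinct xs" "distinct ys"
    using det_pascal_sub_not_distinct_rows det_pascal_sub_not_distinct_cols len by blast+
  then have sorted: "sorted_wrt (<) (sort xs)" "sorted_wrt (<) (sort ys)"
    by (simp_all add: strict_sorted_iff)
  have "\<forall>i<length (sort xs). sort xs ! i \<le> sort ys ! i"
    using det_pascal_sub_nonzero_iff[OF sorted] det_pascal_sub_sort_nonzero[OF len nz] len by simp
  moreover have "subseq (sort xs) r"
    by (rule sorted_subset_imp_subseq) (use sorted(1) xs r in \<open>simp_all add: strict_sorted_imp_sorted\<close>)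
  moreover have "subseq (sort ys) c"
    by (rule sorted_subset_imp_subseq) (use sorted(2) ys c in \<open>simp_all add: strict_sorted_imp_sorted\<close>)
  ultimately have "ordered_subpair r c (sort xs) (sort ys)"
    unfolding ordered_subpair_def using len by simp
  then show False
    using mx longer unfolding maximal_subpair_def by fastforce
qed

lemma pascal_sub_factor_maximal:
  assumes mx: "maximal_subpair r c rh ch"
    and r: "sorted_wrt (<) r" and c: "sorted_wrt (<) c"
    and A': "A' \<in> carrier_mat k k" and k: "length rh = k"
    and inv: "pascal_sub rh ch * A' = 1\<^sub>m k"
  shows "pascal_sub r c = pascal_sub r ch * (A' * pascal_sub rh c)"
proof (rule eq_matI)
  have sub: "subseq rh r" "subseq ch c" and len_ch: "length ch = k"
    using mx k unfolding maximal_subpair_def ordered_subpair_def by auto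
  let ?A = "pascal_sub rh ch"
  have A: "?A \<in> carrier_mat k k" using pascal_sub_carrier[of rh ch] k len_ch by simp
  have "det ?A * det A' = 1" using det_mult[OF A A'] inv by simp
  then have det_A: "det ?A \<noteq> 0" by auto
  fix i j assume "i < dim_row (pascal_sub r ch * (A' * pascal_sub rh c))"
    and "j < dim_col (pascal_sub r ch * (A' * pascal_sub rh c))"
  then have i: "i < length r" and j: "j < length c" by simp_all
  let ?x = "r ! i" and ?y = "c ! j"
  let ?S = "pascal_sub [?x] [?y] - pascal_sub [?x] ch * (A' * pascal_sub rh [?y])"
  have "det (pascal_sub (rh @ [?x]) (ch @ [?y])) = 0"
    by (rule det_pascal_sub_beyond_maximal[OF mx r c])
      (use i j set_mono_subseq[OF sub(1)] set_mono_subseq[OF sub(2)] k len_ch in auto)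
  moreover have "det (pascal_sub (rh @ [?x]) (ch @ [?y])) = det ?A * det ?S"
    unfolding pascal_sub_append
    by (rule det_four_block_mat_schur_complement[OF A _ _ _ A' inv])
      (use pascal_sub_carrier k len_ch in auto)
  moreover have S: "?S \<in> carrier_mat 1 1"
    using A' k unfolding carrier_mat_def by simp
  ultimately have "?S $$ (0, 0) = 0"
    using det_A det_single[OF S] by simp
  then show "pascal_sub r c $$ (i, j) = (pascal_sub r ch * (A' * pascal_sub rh c)) $$ (i, j)"
    using i j A' k len_ch
    by (simp add: col_mult2[OF A' pascal_sub_carrier[of rh c, unfolded k]]
        col_mult2[OF A' pascal_sub_carrier[of rh "[?y]", unfolded k]])
qed simp_all

lemma rank_pascal_sub_ge_minor:
  assumes "det (pascal_sub (nths r I) (nths c J)) \<noteq> 0"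
  shows "length (nths c J) \<le> vec_space.rank (length r) (pascal_sub r c)"
  using vec_space.rank_gt_minor[OF pascal_sub_carrier[of r c], of I J] assms
  by (simp add: submatrix_pascal_sub length_nths)

lemma det_pascal_sub_ordered_subpair_nonzero:
  assumes os: "ordered_subpair r c rh ch" and r: "sorted_wrt (<) r" and c: "sorted_wrt (<) c"
  shows "det (pascal_sub rh ch) \<noteq> 0"
proof -
  have "subseq rh r" "subseq ch c" "length rh = length ch" "\<forall>i<length rh. rh ! i \<le> ch ! i"
    using os unfolding ordered_subpair_def by auto
  then show ?thesis
    using det_pascal_sub_nonzero_iff subseq_sorted_wrt r c by blast
qed

lemma rank_pascal_sub_ordered_subpair:
  assumes os: "ordered_subpair r c rh ch" and r: "sorted_wrt (<) r" and c: "sorted_wrt (<) c"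
  shows "vec_space.rank (length rh) (pascal_sub rh c) = length rh"
    and "vec_space.rank (length r) (pascal_sub r ch) = length rh"
proof -
  have sub: "subseq rh r" "subseq ch c" and len: "length rh = length ch"
    using os unfolding ordered_subpair_def by auto
  obtain I where I: "rh = nths r I" using subseq_obtain_nths[OF sub(1)] by metis
  obtain J where J: "ch = nths c J" using subseq_obtain_nths[OF sub(2)] by metis
  have det_A: "det (pascal_sub rh ch) \<noteq> 0"
    by (rule det_pascal_sub_ordered_subpair_nonzero[OF os r c])
  have "length ch \<le> vec_space.rank (length rh) (pascal_sub rh c)"
    using rank_pascal_sub_ge_minor[of rh UNIV c J] det_A J by (simp add: nths_all)
  then show "vec_space.rank (length rh) (pascal_sub rh c) = length rh"
    using vec_space.rank_le_nr[OF pascal_sub_carrier[of rh c]] len by simp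
  have "length rh \<le> vec_space.rank (length r) (pascal_sub r ch)"
    using rank_pascal_sub_ge_minor[of r I ch UNIV] det_A I len by (simp add: nths_all)
  then show "vec_space.rank (length r) (pascal_sub r ch) = length rh"
    using vec_space.rank_le_nc[OF pascal_sub_carrier[of r ch]] len by simp
qed

lemma spaces_pascal_sub_maximal_subpair:
  assumes mx: "maximal_subpair r c rh ch" and r: "sorted_wrt (<) r" and c: "sorted_wrt (<) c"
  shows "vec_space.col_space (length r) (pascal_sub r ch) = vec_space.col_space (length r) (pascal_sub r c)"
    and "vec_space.row_space (length c) (pascal_sub rh c) = vec_space.row_space (length c) (pascal_sub r c)"
proof -
  have os: "ordered_subpair r c rh ch" using mx unfolding maximal_subpair_def by simp
  then have sub: "subseq rh r" "subseq ch c" and len: "length ch = length rh"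
    unfolding ordered_subpair_def by auto
  have A: "pascal_sub rh ch \<in> carrier_mat (length rh) (length rh)"
    using pascal_sub_carrier[of rh ch] len by simp
  have B: "pascal_sub rh c \<in> carrier_mat (length rh) (length c)" by (rule pascal_sub_carrier)
  have C: "pascal_sub r ch \<in> carrier_mat (length r) (length rh)"
    using pascal_sub_carrier[of r ch] len by simp
  obtain A' where A': "A' \<in> carrier_mat (length rh) (length rh)" "pascal_sub rh ch * A' = 1\<^sub>m (length rh)"
    using det_nonzero_obtain_inverse[OF A det_pascal_sub_ordered_subpair_nonzero[OF os r c]] by metis
  have factor: "pascal_sub r c = pascal_sub r ch * (A' * pascal_sub rh c)"
    by (rule pascal_sub_factor_maximal[OF mx r c A'(1) refl A'(2)])
  have "vec_space.col_space (length r) (pascal_sub r c) \<subseteq> vec_space.col_space (length r) (pascal_sub r ch)"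
    by (subst factor) (rule vec_space.col_space_mult_subset[OF C mult_carrier_mat[OF A'(1) B]])
  then show "vec_space.col_space (length r) (pascal_sub r ch) = vec_space.col_space (length r) (pascal_sub r c)"
    using vec_space.col_space_mono[OF set_cols_pascal_sub_mono[OF set_mono_subseq[OF sub(2)]]] by blast
  have "vec_space.row_space (length c) (pascal_sub r c) \<subseteq> vec_space.row_space (length c) (pascal_sub rh c)"
    by (subst factor, subst assoc_mult_mat[OF C A'(1) B, symmetric])
      (rule vec_space.row_space_mult_subset[OF mult_carrier_mat[OF C A'(1)] B])
  then show "vec_space.row_space (length c) (pascal_sub rh c) = vec_space.row_space (length c) (pascal_sub r c)"
    using vec_space.row_space_mono[OF set_rows_pascal_sub_mono[OF set_mono_subseq[OF sub(1)]]] by blast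
qed

theorem theorem2:
  fixes r c rh ch :: "nat list" and m n p :: nat
  assumes "selection r" and "selection c"
    and "length r = m + 1" and "length c = n + 1"
    and "ordered_subpair r c rh ch" and "length rh = p + 1"
  shows "(pascal_sub rh ch \<in> carrier_mat (p+1) (p+1) \<and> invertible_mat (pascal_sub rh ch)
          \<and> (\<exists>I J. I \<subseteq> {..<m+1} \<and> J \<subseteq> {..<n+1} \<and> pascal_sub rh ch = submatrix (pascal_sub r c) I J))
    \<and> (pascal_sub rh c \<in> carrier_mat (p+1) (n+1) \<and> vec_space.rank (p+1) (pascal_sub rh c) = p + 1)
    \<and> (pascal_sub r ch \<in> carrier_mat (m+1) (p+1) \<and> vec_space.rank (m+1) (pascal_sub r ch) = p + 1)
    \<and> (maximal_subpair r c rh ch \<longrightarrow>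
          vec_space.rank (m+1) (pascal_sub r c) = p + 1
        \<and> vec_space.col_space (m+1) (pascal_sub r ch) = vec_space.col_space (m+1) (pascal_sub r c)
        \<and> vec_space.row_space (n+1) (pascal_sub rh c) = vec_space.row_space (n+1) (pascal_sub r c))"
proof -
  have r: "sorted_wrt (<) r" and c: "sorted_wrt (<) c"
    using assms(1,2) unfolding selection_def by auto
  have sub: "subseq rh r" "subseq ch c" and len_ch: "length ch = p + 1"
    using assms(5,6) unfolding ordered_subpair_def by auto
  obtain I where I: "I \<subseteq> {..<m+1}" "rh = nths r I" using subseq_obtain_nths[OF sub(1)] assms(3) by metis
  obtain J where J: "J \<subseteq> {..<n+1}" "ch = nths c J" using subseq_obtain_nths[OF sub(2)] assms(4) by metis
  have A: "pascal_sub rh ch \<in> carrier_mat (p+1) (p+1)"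
    using pascal_sub_carrier[of rh ch] assms(6) len_ch by simp
  have "invertible_mat (pascal_sub rh ch)"
    by (rule invertible_mat_if_det_nonzero[OF A det_pascal_sub_ordered_subpair_nonzero[OF assms(5) r c]])
  moreover note rank_pascal_sub_ordered_subpair[OF assms(5) r c]
  moreover have "maximal_subpair r c rh ch \<Longrightarrow>
      vec_space.rank (m+1) (pascal_sub r c) = vec_space.rank (m+1) (pascal_sub r ch)"
    using vec_space.rank_eq_if_col_space_eq spaces_pascal_sub_maximal_subpair(1)[OF _ r c] assms(3)
    by metis
  ultimately show ?thesis
    using A I J pascal_sub_carrier[of rh c] pascal_sub_carrier[of r ch] len_ch assms(3,4,6)
      spaces_pascal_sub_maximal_subpair[OF _ r c]
    by (auto simp: submatrix_pascal_sub)
qed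

end
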